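(* Let $\nu>\tfrac14$ and $\kappa>0$. Let $g_k, g_{k+1}, d_k\in\mathbb{R}^n$ with $g_k\neq 0$ and $d_k\neq 0$. Define $$\beta_k=\min\Big\{\frac{\big\langle g_{k+1},\, g_{k+1}-g_k-\frac{\nu\|g_{k+1}-g_k\|_2^2}{\|g_k\|_2^2}\,d_k\big\rangle_{+}}{\|g_k\|_2^2},\ \frac{\kappa\|g_{k+1}\|_2}{\|d_k\|_2}\Big\},$$ where $t_+=\max\{t,0\}$, and $d_{k+1}=-g_{k+1}+\beta_k d_k$. Then, with $\mu=\frac{4\nu-1}{4\nu(1+\kappa)}$, $$\langle d_{k+1},g_{k+1}\rangle\le -\mu\,\|d_{k+1}\|_2\,\|g_{k+1}\|_2 .$$
   Context: $\langle\cdot,\cdot\rangle$ is the Euclidean inner product and $\|\cdot\|=\|\cdot\|_2$ the Euclidean norm on $\mathbb{R}^n$. *)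

theory Defs
  imports "HOL-Analysis.Analysis"
begin

end

theory Submission
  imports Defs
begin

text \<open>Write \<open>y = g\<^sub>k\<^sub>+\<^sub>1 - g\<^sub>k\<close> and \<open>t = \<langle>d\<^sub>k, g\<^sub>k\<^sub>+\<^sub>1\<rangle> / \<parallel>g\<^sub>k\<parallel>\<^sup>2\<close>. Whenever \<open>t > 0\<close>, the first
  term of the minimum gives \<open>\<beta>\<^sub>k \<langle>d\<^sub>k, g\<^sub>k\<^sub>+\<^sub>1\<rangle> \<le> \<parallel>g\<^sub>k\<^sub>+\<^sub>1\<parallel> (\<parallel>y\<parallel> t) - \<nu> (\<parallel>y\<parallel> t)\<^sup>2 \<le> \<parallel>g\<^sub>k\<^sub>+\<^sub>1\<parallel>\<^sup>2 / (4\<nu>)\<close>,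
  so \<open>\<langle>d\<^sub>k\<^sub>+\<^sub>1, g\<^sub>k\<^sub>+\<^sub>1\<rangle> \<le> -(1 - 1/(4\<nu>)) \<parallel>g\<^sub>k\<^sub>+\<^sub>1\<parallel>\<^sup>2\<close>. The second term of the minimum gives
  \<open>\<parallel>d\<^sub>k\<^sub>+\<^sub>1\<parallel> \<le> (1 + \<kappa>) \<parallel>g\<^sub>k\<^sub>+\<^sub>1\<parallel>\<close>, which converts this into the angle condition.\<close>

lemma quadratic_le_square_div:
  fixes a s \<nu> :: real
  assumes "\<nu> > 0"
  shows "a * s - \<nu> * s\<^sup>2 \<le> a\<^sup>2 / (4 * \<nu>)"
proof -
  have "4 * \<nu> * (a * s - \<nu> * s\<^sup>2) = a\<^sup>2 - (2 * \<nu> * s - a)\<^sup>2"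
    by (simp add: power2_eq_square algebra_simps)
  also have "\<dots> \<le> a\<^sup>2" by simp
  finally show ?thesis using assms by (simp add: field_simps)
qed

definition beta_plus :: "real \<Rightarrow> 'a::real_inner \<Rightarrow> 'a \<Rightarrow> 'a \<Rightarrow> real" where
  "beta_plus \<nu> g g1 d =
     max (g1 \<bullet> (g1 - g - (\<nu> * (norm (g1 - g))\<^sup>2 / (norm g)\<^sup>2) *\<^sub>R d)) 0 / (norm g)\<^sup>2"

lemma beta_plus_mult_inner_le:
  fixes g g1 d :: "'a::real_inner"
  assumes "\<nu> > 0" and "g \<noteq> 0" and "0 \<le> \<beta>" and "\<beta> \<le> beta_plus \<nu> g g1 d"
  shows "\<beta> * (d \<bullet> g1) \<le> (norm g1)\<^sup>2 / (4 * \<nu>)"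
proof (cases "d \<bullet> g1 \<le> 0")
  case True
  then have "\<beta> * (d \<bullet> g1) \<le> 0" using assms(3) by (simp add: mult_nonneg_nonpos)
  also have "0 \<le> (norm g1)\<^sup>2 / (4 * \<nu>)" using assms(1) by simp
  finally show ?thesis .
next
  case False
  define a where "a = (norm g)\<^sup>2"
  define y where "y = g1 - g"
  define t where "t = (d \<bullet> g1) / a"
  define N where "N = g1 \<bullet> y - \<nu> * (norm y)\<^sup>2 * t"
  have a_pos: "a > 0" using assms(2) by (simp add: a_def)
  have t_pos: "t > 0" using False a_pos by (simp add: t_def)
  have inner_eq: "d \<bullet> g1 = t * a" using a_pos by (simp add: t_def)
  have "beta_plus \<nu> g g1 d = max N 0 / a"
    by (simp add: beta_plus_def N_def y_def t_def a_def inner_diff_right inner_commute algebra_simps)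
  then have "\<beta> \<le> max N 0 / a" using assms(4) by simp
  then have "\<beta> * a \<le> max N 0" using a_pos by (simp add: pos_le_divide_eq)
  then have "\<beta> * (d \<bullet> g1) \<le> max N 0 * t"
    using t_pos inner_eq by (metis mult.assoc mult.commute mult_right_mono less_imp_le)
  also have "\<dots> \<le> max (norm g1 * (norm y * t) - \<nu> * (norm y * t)\<^sup>2) 0"
  proof -
    have "(g1 \<bullet> y) * t \<le> norm g1 * norm y * t"
      using norm_cauchy_schwarz t_pos by (simp add: mult_right_mono)
    then have "N * t \<le> norm g1 * (norm y * t) - \<nu> * (norm y * t)\<^sup>2"
      by (simp add: N_def power2_eq_square algebra_simps)
    then show ?thesis using t_pos by (auto simp: max_def)
  qed
  also have "\<dots> \<le> (norm g1)\<^sup>2 / (4 * \<nu>)"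
    using quadratic_le_square_div[OF assms(1)] assms(1) by simp
  finally show ?thesis .
qed

lemma sufficient_descent_of_bounded_beta:
  fixes g1 d :: "'a::real_inner" and \<nu> \<kappa> \<beta> :: real
  assumes "\<nu> > 1/4" and "\<kappa> > 0" and "0 \<le> \<beta>"
    and inner_bound: "\<beta> * (d \<bullet> g1) \<le> (norm g1)\<^sup>2 / (4 * \<nu>)"
    and norm_bound: "\<beta> * norm d \<le> \<kappa> * norm g1"
  shows "(- g1 + \<beta> *\<^sub>R d) \<bullet> g1 \<le> - ((4 * \<nu> - 1) / (4 * \<nu> * (1 + \<kappa>))) * norm (- g1 + \<beta> *\<^sub>R d) * norm g1"
proof -
  define \<mu> where "\<mu> = (4 * \<nu> - 1) / (4 * \<nu> * (1 + \<kappa>))"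
  have \<mu>_nonneg: "\<mu> \<ge> 0" unfolding \<mu>_def using assms(1,2) by (intro divide_nonneg_pos) auto
  have \<mu>_mult: "\<mu> * (1 + \<kappa>) = 1 - 1 / (4 * \<nu>)"
  proof -
    have "1 + \<kappa> \<noteq> 0" "\<nu> \<noteq> 0" using assms(1,2) by auto
    then have "\<mu> * (1 + \<kappa>) = (4 * \<nu> - 1) / (4 * \<nu>)" by (simp add: \<mu>_def)
    also have "\<dots> = 1 - 1 / (4 * \<nu>)" using \<open>\<nu> \<noteq> 0\<close> by (simp add: diff_divide_distrib)
    finally show ?thesis .
  qed
  have "norm (- g1 + \<beta> *\<^sub>R d) \<le> norm g1 + \<beta> * norm d"
    using norm_triangle_ineq[of "- g1" "\<beta> *\<^sub>R d"] assms(3) by simp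
  also have "\<dots> \<le> (1 + \<kappa>) * norm g1" using norm_bound by (simp add: algebra_simps)
  finally have "\<mu> * norm (- g1 + \<beta> *\<^sub>R d) * norm g1 \<le> \<mu> * ((1 + \<kappa>) * norm g1) * norm g1"
    using \<mu>_nonneg by (intro mult_right_mono mult_left_mono) auto
  also have "\<dots> = (\<mu> * (1 + \<kappa>)) * (norm g1)\<^sup>2"
    by (simp add: power2_eq_square)
  also have "\<dots> = (norm g1)\<^sup>2 - (norm g1)\<^sup>2 / (4 * \<nu>)"
    unfolding \<mu>_mult by (simp add: left_diff_distrib)
  also have "\<dots> \<le> - ((- g1 + \<beta> *\<^sub>R d) \<bullet> g1)"
  proof -
    have "(- g1 + \<beta> *\<^sub>R d) \<bullet> g1 = \<beta> * (d \<bullet> g1) - (norm g1)\<^sup>2"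
      by (simp add: inner_diff_left power2_norm_eq_inner)
    then show ?thesis using inner_bound by linarith
  qed
  finally show ?thesis by (simp add: \<mu>_def)
qed

theorem lemma1:
  fixes g_k g_k1 d_k :: "real ^ 'n" and \<nu> \<kappa> :: real
  assumes "\<nu> > 1/4" and "\<kappa> > 0" and "g_k \<noteq> 0" and "d_k \<noteq> 0"
  shows "let \<beta> = min (max (g_k1 \<bullet> (g_k1 - g_k - (\<nu> * (norm (g_k1 - g_k))^2 / (norm g_k)^2) *\<^sub>R d_k)) 0
                          / (norm g_k)^2)
                     (\<kappa> * norm g_k1 / norm d_k);
             d_k1 = - g_k1 + \<beta> *\<^sub>R d_k;
             \<mu> = (4 * \<nu> - 1) / (4 * \<nu> * (1 + \<kappa>))
         in d_k1 \<bullet> g_k1 \<le> - \<mu> * norm d_k1 * norm g_k1"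
proof -
  define \<beta> where "\<beta> = min (beta_plus \<nu> g_k g_k1 d_k) (\<kappa> * norm g_k1 / norm d_k)"
  have "0 \<le> \<beta>"
    using assms(2) by (simp add: \<beta>_def beta_plus_def)
  moreover have "\<beta> * (d_k \<bullet> g_k1) \<le> (norm g_k1)\<^sup>2 / (4 * \<nu>)"
    using assms(1,3) \<open>0 \<le> \<beta>\<close> by (intro beta_plus_mult_inner_le) (auto simp: \<beta>_def)
  moreover have "\<beta> * norm d_k \<le> \<kappa> * norm g_k1"
  proof -
    have "\<beta> \<le> \<kappa> * norm g_k1 / norm d_k" by (simp add: \<beta>_def)
    then show ?thesis using assms(4) by (simp add: pos_le_divide_eq mult.commute)
  qed
  ultimately show ?thesis
    using sufficient_descent_of_bounded_beta[OF assms(1,2)]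
    unfolding Let_def \<beta>_def beta_plus_def by blast
qed

end
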